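(* Let $a,b\in\mathbb{C}$ with $ab\neq0,\ ab\neq1,\ ab\neq-1$. Then the Lie superalgebra $\Gamma$ defined in the context is isomorphic to the Lie subsuperalgebra of $\mathrm{End}(\tilde{\mathcal{W}}^{2|2})$ spanned by the following matrices (writing $u=\tau^{-1}\circ t^{-1}\in\tilde{\mathcal W}$): $$\tilde C_+=(t\tau)I_4,\quad \tilde C=I_4,\quad \tilde C_-=u\,I_4,$$ $$\tilde E_1=E_{12},\ \tilde F_1=E_{21},\ \tilde H_1=E_{11}-E_{22},\ \tilde E_2=E_{43},\ \tilde F_2=E_{34},\ \tilde H_2=E_{33}-E_{44},$$ $$\tilde T_3=(t\tau)E_{13}+aE_{42},\quad \tilde T_2=-(t\tau)E_{14}+aE_{32},\quad \tilde D_4=(t\tau)E_{24}+aE_{31},\quad \tilde D_1=-(t\tau)E_{23}+aE_{41},$$ $$\tilde T_1=bE_{14}+uE_{32},\quad \tilde T_4=bE_{13}-uE_{42},\quad \tilde D_2=bE_{23}+uE_{41},\quad \tilde D_3=bE_{24}-uE_{31}.$$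
   Context: The Lie superalgebra $\Gamma$ (a contraction of $D(2,1;\alpha)$ as $\alpha\to1$) has basis consisting of odd elements $T_1,T_2,T_3,T_4,D_1,D_2,D_3,D_4$ and even elements $E_1,H_1,F_1,E_2,H_2,F_2,C,C_+,C_-$, with the following nonzero brackets: $[T_1,T_3]=[T_2,T_4]=E_1$; $[D_1,D_3]=[D_2,D_4]=F_1$; $[E_1,D_1]=-2T_3$, $[E_1,D_3]=-2T_1$, $[E_1,D_2]=-2T_4$, $[E_1,D_4]=-2T_2$; $[F_1,T_1]=2D_3$, $[F_1,T_3]=2D_1$, $[F_1,T_2]=2D_4$, $[F_1,T_4]=2D_2$; $[E_2,T_1]=-T_4$, $[E_2,T_2]=T_3$, $[E_2,D_4]=D_1$, $[E_2,D_3]=-D_2$; $[F_2,T_4]=T_1$, $[F_2,T_3]=-T_2$, $[F_2,D_1]=-D_4$, $[F_2,D_2]=D_3$; $[E_1,F_1]=-4H_1$, $[E_2,F_2]=-H_2$, $[H_i,E_i]=2E_i$, $[H_i,F_i]=-2F_i$ ($i=1,2$); $[H_1,T_k]=T_k$, $[H_1,D_k]=-D_k$ ($k=1,\dots,4$); $[H_2,T_1]=-T_1$, $[H_2,T_2]=-T_2$, $[H_2,T_3]=T_3$, $[H_2,T_4]=T_4$, $[H_2,D_1]=D_1$, $[H_2,D_2]=D_2$, $[H_2,D_3]=-D_3$, $[H_2,D_4]=-D_4$; $[T_1,D_4]=-2F_2$, $[T_2,D_3]=2F_2$, $[D_1,T_4]=2E_2$, $[D_2,T_3]=-2E_2$;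 $[T_3,D_4]=C_+$, $[T_4,D_3]=C_-$, $[T_1,D_2]=-C_-$, $[T_2,D_1]=-C_+$; $[T_1,D_1]=H_1+H_2-\tfrac{C}{2}$, $[T_2,D_2]=H_1+H_2+\tfrac{C}{2}$, $[T_3,D_3]=H_1-H_2+\tfrac{C}{2}$, $[T_4,D_4]=H_1-H_2-\tfrac{C}{2}$. Brackets obtained from these by super-antisymmetry $[Y,X]=-(-1)^{p(X)p(Y)}[X,Y]$ are understood, and all other brackets of basis elements are zero (in particular $C,C_+,C_-$ are central). $\tilde{\mathcal W}$ is the associative algebra of pseudodifferential symbols on the circle: formal series $A=\sum_{i=-\infty}^{n}a_i(t)\tau^i$ with $a_i\in\mathbb{C}[t,t^{-1}]$, $n\in\mathbb{Z}$, with product $A\circ B=\sum_{n\ge0}\frac1{n!}\,\partial_\tau^nA\,\partial_t^nB$. $\mathrm{End}(\tilde{\mathcal W}^{2|2})$ is the Lie superalgebra of $4\times4$ matrices over $\tilde{\mathcal W}$, rows/columns $1,2$ even and $3,4$ odd (a matrix is even if entries at $(k,l)$ with $k,l$ of different parity vanish, odd if entries with $k,l$ of the same parity vanish), with matrix product computed using $\circ$ and bracket $[X,Y]=XY-(-1)^{p(X)p(Y)}YX$. $E_{kl}$ is the matrix unit at position $(k,l)$, $wE_{kl}$ has $w\in\tilde{\mathcal W}$ there, and $I_4$ is the identity matrix. *)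

theory Defs
  imports Complex_Main
begin

datatype gb = T1 | T2 | T3 | T4 | D1 | D2 | D3 | D4
  | E1 | H1 | F1 | E2 | H2 | F2 | C | Cp | Cm

lemma gb_UNIV: "(UNIV :: gb set) = {T1,T2,T3,T4,D1,D2,D3,D4,E1,H1,F1,E2,H2,F2,C,Cp,Cm}"
  by (auto intro: gb.exhaust)

instance gb :: finite
  by standard (simp add: gb_UNIV)

definition gb_odd :: "gb \<Rightarrow> bool" where
  "gb_odd x \<longleftrightarrow> x \<in> {T1,T2,T3,T4,D1,D2,D3,D4}"

text \<open>Elements of Gamma: coefficient vectors w.r.t. the basis.\<close>
type_synonym gamma = "gb \<Rightarrow> complex"

definition lc :: "(gb \<times> complex) list \<Rightarrow> gamma" where
  "lc xs = (\<lambda>z. sum_list (map snd (filter (\<lambda>p. fst p = z) xs)))"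

text \<open>The list of nonzero brackets given in the paper.\<close>
definition gtable :: "(gb \<times> gb \<times> (gb \<times> complex) list) list" where
  "gtable = [
    (T1,T3,[(E1,1)]), (T2,T4,[(E1,1)]),
    (D1,D3,[(F1,1)]), (D2,D4,[(F1,1)]),
    (E1,D1,[(T3,-2)]), (E1,D3,[(T1,-2)]), (E1,D2,[(T4,-2)]), (E1,D4,[(T2,-2)]),
    (F1,T1,[(D3,2)]), (F1,T3,[(D1,2)]), (F1,T2,[(D4,2)]), (F1,T4,[(D2,2)]),
    (E2,T1,[(T4,-1)]), (E2,T2,[(T3,1)]), (E2,D4,[(D1,1)]), (E2,D3,[(D2,-1)]),
    (F2,T4,[(T1,1)]), (F2,T3,[(T2,-1)]), (F2,D1,[(D4,-1)]), (F2,D2,[(D3,1)]),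
    (E1,F1,[(H1,-4)]), (E2,F2,[(H2,-1)]),
    (H1,E1,[(E1,2)]), (H1,F1,[(F1,-2)]), (H2,E2,[(E2,2)]), (H2,F2,[(F2,-2)]),
    (H1,T1,[(T1,1)]), (H1,T2,[(T2,1)]), (H1,T3,[(T3,1)]), (H1,T4,[(T4,1)]),
    (H1,D1,[(D1,-1)]), (H1,D2,[(D2,-1)]), (H1,D3,[(D3,-1)]), (H1,D4,[(D4,-1)]),
    (H2,T1,[(T1,-1)]), (H2,T2,[(T2,-1)]), (H2,T3,[(T3,1)]), (H2,T4,[(T4,1)]),
    (H2,D1,[(D1,1)]), (H2,D2,[(D2,1)]), (H2,D3,[(D3,-1)]), (H2,D4,[(D4,-1)]),
    (T1,D4,[(F2,-2)]), (T2,D3,[(F2,2)]), (D1,T4,[(E2,2)]), (D2,T3,[(E2,-2)]),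
    (T3,D4,[(Cp,1)]), (T4,D3,[(Cm,1)]), (T1,D2,[(Cm,-1)]), (T2,D1,[(Cp,-1)]),
    (T1,D1,[(H1,1),(H2,1),(C,-1/2)]), (T2,D2,[(H1,1),(H2,1),(C,1/2)]),
    (T3,D3,[(H1,1),(H2,-1),(C,1/2)]), (T4,D4,[(H1,1),(H2,-1),(C,-1/2)])
  ]"

definition tlookup :: "gb \<Rightarrow> gb \<Rightarrow> (gb \<times> complex) list option" where
  "tlookup x y = map_option (snd \<circ> snd) (find (\<lambda>e. fst e = x \<and> fst (snd e) = y) gtable)"

text \<open>Bracket of basis elements: table entries, their super-antisymmetric
  counterparts [Y,X] = -(-1)^(p(X)p(Y)) [X,Y], and zero otherwise.\<close>
definition gbr_basis :: "gb \<Rightarrow> gb \<Rightarrow> gamma" where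
  "gbr_basis x y =
     (case tlookup x y of
        Some r \<Rightarrow> lc r
      | None \<Rightarrow> (case tlookup y x of
                  Some r \<Rightarrow> (\<lambda>z. (if gb_odd x \<and> gb_odd y then 1 else -1) * lc r z)
                | None \<Rightarrow> (\<lambda>z. 0)))"

definition gbr :: "gamma \<Rightarrow> gamma \<Rightarrow> gamma" where
  "gbr u v = (\<lambda>z. \<Sum>x\<in>UNIV. \<Sum>y\<in>UNIV. u x * v y * gbr_basis x y z)"

definition gamma_even :: "gamma \<Rightarrow> bool" where
  "gamma_even u \<longleftrightarrow> (\<forall>x. gb_odd x \<longrightarrow> u x = 0)"

definition gamma_odd :: "gamma \<Rightarrow> bool" where
  "gamma_odd u \<longleftrightarrow> (\<forall>x. \<not> gb_odd x \<longrightarrow> u x = 0)"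

text \<open>A symbol A = sum_i a_i(t) tau^i is represented by its coefficient function:
  A i j is the coefficient of t^j tau^i.\<close>
type_synonym psd = "int \<Rightarrow> int \<Rightarrow> complex"

definition psd_wf :: "psd \<Rightarrow> bool" where
  "psd_wf A \<longleftrightarrow> (\<exists>N. \<forall>i>N. \<forall>j. A i j = 0) \<and> (\<forall>i. finite {j. A i j \<noteq> 0})"

definition psd_zero :: psd where "psd_zero = (\<lambda>i j. 0)"
definition psd_add :: "psd \<Rightarrow> psd \<Rightarrow> psd" where "psd_add A B = (\<lambda>i j. A i j + B i j)"
definition psd_smult :: "complex \<Rightarrow> psd \<Rightarrow> psd" where "psd_smult c A = (\<lambda>i j. c * A i j)"

definition psd_mono :: "complex \<Rightarrow> int \<Rightarrow> int \<Rightarrow> psd" where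
  "psd_mono c i j = (\<lambda>i' j'. if i' = i \<and> j' = j then c else 0)"

text \<open>Falling factorial x(x-1)...(x-n+1): d^n/dx^n x^k = ff k n x^(k-n).\<close>
definition ff :: "int \<Rightarrow> nat \<Rightarrow> complex" where
  "ff k n = (\<Prod>m<n. of_int k - of_nat m)"

text \<open>A o B = sum_n 1/n! d_tau^n A d_t^n B.  The coefficient of t^j tau^i receives
  contributions from n, a term a t^j1 tau^i1 of A and a term t^j2 tau^i2 of B with
  i = i1 - n + i2, j = j1 + j2 - n.  For well-formed symbols only finitely many
  terms are nonzero.\<close>
definition psd_term :: "psd \<Rightarrow> psd \<Rightarrow> int \<Rightarrow> int \<Rightarrow> nat \<times> int \<times> int \<Rightarrow> complex" where
  "psd_term A B i j = (\<lambda>(n, i1, j1).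
      let i2 = i + int n - i1; j2 = j + int n - j1 in
      A i1 j1 * B i2 j2 * ff i1 n * ff j2 n / of_nat (fact n))"

definition psd_mult :: "psd \<Rightarrow> psd \<Rightarrow> psd" where
  "psd_mult A B = (\<lambda>i j. \<Sum>x\<in>{x. psd_term A B i j x \<noteq> 0}. psd_term A B i j x)"

text \<open>Rows/columns are indexed 1..4; 1,2 even and 3,4 odd.\<close>
type_synonym mat = "nat \<Rightarrow> nat \<Rightarrow> psd"

definition idx_odd :: "nat \<Rightarrow> bool" where "idx_odd k \<longleftrightarrow> k \<in> {3,4}"

definition munit :: "psd \<Rightarrow> nat \<Rightarrow> nat \<Rightarrow> mat" where
  "munit w k l = (\<lambda>k' l'. if k' = k \<and> l' = l then w else psd_zero)"

definition madd :: "mat \<Rightarrow> mat \<Rightarrow> mat" where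
  "madd X Y = (\<lambda>k l. psd_add (X k l) (Y k l))"

definition msub :: "mat \<Rightarrow> mat \<Rightarrow> mat" where
  "msub X Y = (\<lambda>k l. psd_add (X k l) (psd_smult (-1) (Y k l)))"

definition msmult :: "complex \<Rightarrow> mat \<Rightarrow> mat" where
  "msmult c X = (\<lambda>k l. psd_smult c (X k l))"

definition mscal :: "psd \<Rightarrow> mat" where
  "mscal w = (\<lambda>k l. if k = l \<and> k \<in> {1..4} then w else psd_zero)"

definition mmult :: "mat \<Rightarrow> mat \<Rightarrow> mat" where
  "mmult X Y = (\<lambda>k l. foldr psd_add (map (\<lambda>m. psd_mult (X k m) (Y m l)) [1,2,3,4]) psd_zero)"

definition meven_part :: "mat \<Rightarrow> mat" where
  "meven_part X = (\<lambda>k l. if idx_odd k = idx_odd l then X k l else psd_zero)"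

definition modd_part :: "mat \<Rightarrow> mat" where
  "modd_part X = (\<lambda>k l. if idx_odd k \<noteq> idx_odd l then X k l else psd_zero)"

definition mat_even :: "mat \<Rightarrow> bool" where "mat_even X \<longleftrightarrow> modd_part X = (\<lambda>k l. psd_zero)"
definition mat_odd :: "mat \<Rightarrow> bool" where "mat_odd X \<longleftrightarrow> meven_part X = (\<lambda>k l. psd_zero)"

definition comm :: "mat \<Rightarrow> mat \<Rightarrow> mat" where "comm X Y = msub (mmult X Y) (mmult Y X)"
definition acomm :: "mat \<Rightarrow> mat \<Rightarrow> mat" where "acomm X Y = madd (mmult X Y) (mmult Y X)"

text \<open>Super bracket [X,Y] = XY - (-1)^(p(X)p(Y)) YX on homogeneous matrices,
  extended bilinearly.\<close>
definition mbr :: "mat \<Rightarrow> mat \<Rightarrow> mat" where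
  "mbr X Y = madd (madd (comm (meven_part X) (meven_part Y)) (comm (meven_part X) (modd_part Y)))
                  (madd (comm (modd_part X) (meven_part Y)) (acomm (modd_part X) (modd_part Y)))"

definition tt :: psd where "tt = psd_mono 1 1 1"
definition psd_c :: "complex \<Rightarrow> psd" where "psd_c c = psd_mono c 0 0"
definition uu :: psd where "uu = psd_mult (psd_mono 1 (-1) 0) (psd_mono 1 0 (-1))"

definition tmat :: "complex \<Rightarrow> complex \<Rightarrow> gb \<Rightarrow> mat" where
  "tmat a b x = (case x of
      Cp \<Rightarrow> mscal tt
    | C \<Rightarrow> mscal (psd_c 1)
    | Cm \<Rightarrow> mscal uu
    | E1 \<Rightarrow> munit (psd_c 1) 1 2
    | F1 \<Rightarrow> munit (psd_c 1) 2 1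
    | H1 \<Rightarrow> msub (munit (psd_c 1) 1 1) (munit (psd_c 1) 2 2)
    | E2 \<Rightarrow> munit (psd_c 1) 4 3
    | F2 \<Rightarrow> munit (psd_c 1) 3 4
    | H2 \<Rightarrow> msub (munit (psd_c 1) 3 3) (munit (psd_c 1) 4 4)
    | T3 \<Rightarrow> madd (munit tt 1 3) (munit (psd_c a) 4 2)
    | T2 \<Rightarrow> madd (munit (psd_smult (-1) tt) 1 4) (munit (psd_c a) 3 2)
    | D4 \<Rightarrow> madd (munit tt 2 4) (munit (psd_c a) 3 1)
    | D1 \<Rightarrow> madd (munit (psd_smult (-1) tt) 2 3) (munit (psd_c a) 4 1)
    | T1 \<Rightarrow> madd (munit (psd_c b) 1 4) (munit uu 3 2)
    | T4 \<Rightarrow> madd (munit (psd_c b) 1 3) (munit (psd_smult (-1) uu) 4 2)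
    | D2 \<Rightarrow> madd (munit (psd_c b) 2 3) (munit uu 4 1)
    | D3 \<Rightarrow> madd (munit (psd_c b) 2 4) (munit (psd_smult (-1) uu) 3 1))"

definition mspan :: "complex \<Rightarrow> complex \<Rightarrow> mat set" where
  "mspan a b = {X. \<exists>c :: gb \<Rightarrow> complex. X = (\<lambda>k l i j. \<Sum>x\<in>UNIV. c x * tmat a b x k l i j)}"

end

theory Submission
  imports Defs
begin

text \<open>
  Every entry of the seventeen matrices is an affine combination of 1, t\<tau> and u, and
  t\<tau> \<circ> u = u \<circ> t\<tau> = 1. Hence all products of entries lie in the span of
  1, t\<tau>, u, (t\<tau>)\<circ>(t\<tau>) and u\<circ>u, and each super bracket of two of the matrices is a
  finite computation with 4 \<times> 4 matrices of coefficient vectors. After rescaling the matrices by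
  suitable scalars, which are finite and nonzero exactly when ab \<notin> {0, 1, -1}, these brackets
  reproduce the structure constants of \<Gamma>; the linear map sending the basis of \<Gamma> to the rescaled
  matrices is then a bracket-preserving bijection onto their span, because the matrices are
  linearly independent, as single coefficients of single entries show.
\<close>

(* Symbols supported on the monomials t^k \<tau>^k with k \<le> 1, such as 1, t\<tau> and u: the sum
   defining their product ranges over a finite window, so psd_mult is bilinear on them. *)
definition diag_symbol :: "psd \<Rightarrow> bool" where
  "diag_symbol A \<longleftrightarrow> (\<forall>i j. A i j \<noteq> 0 \<longrightarrow> i = j \<and> i \<le> 1)"

lemma sum_nonzero_superset:
  assumes "finite S" "{x. f x \<noteq> 0} \<subseteq> S"
  shows "sum f {x. f x \<noteq> 0} = sum f S"
  using assms by (intro sum.mono_neutral_left) (auto intro: finite_subset)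

lemma psd_term_simp:
  "psd_term A B i j (n, i1, j1) =
     A i1 j1 * B (i + int n - i1) (j + int n - j1) * (ff i1 n * ff (j + int n - j1) n / fact n)"
  by (simp add: psd_term_def Let_def)

lemma psd_mult_diag:
  assumes "diag_symbol A" "diag_symbol B"
  shows "psd_mult A B i j = (\<Sum>x\<in>{0..nat (2 - i)} \<times> {i - 1..1} \<times> {i - 1..1}. psd_term A B i j x)"
  unfolding psd_mult_def
proof (rule sum_nonzero_superset)
  show "{x. psd_term A B i j x \<noteq> 0} \<subseteq> {0..nat (2 - i)} \<times> {i - 1..1} \<times> {i - 1..1}"
    using assms by (fastforce simp: psd_term_simp diag_symbol_def)
qed simp

lemma diag_symbol_sum:
  assumes "\<And>x. x \<in> I \<Longrightarrow> diag_symbol (A x)"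
  shows "diag_symbol (\<lambda>i j. \<Sum>x\<in>I. c x * A x i j)"
  using assms unfolding diag_symbol_def by (metis (no_types, lifting) mult_zero_right sum.neutral)

lemma diag_symbol_zero: "diag_symbol psd_zero"
  by (simp add: diag_symbol_def psd_zero_def)

lemma psd_mult_sum_sum:
  assumes "finite I" "finite J" "\<And>x. x \<in> I \<Longrightarrow> diag_symbol (A x)" "\<And>y. y \<in> J \<Longrightarrow> diag_symbol (B y)"
  shows "psd_mult (\<lambda>i j. \<Sum>x\<in>I. c x * A x i j) (\<lambda>i j. \<Sum>y\<in>J. d y * B y i j) i j
     = (\<Sum>x\<in>I. \<Sum>y\<in>J. c x * d y * psd_mult (A x) (B y) i j)"
proof -
  let ?S = "{0..nat (2 - i)} \<times> {i - 1..1} \<times> {i - 1..1}"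
  have "psd_mult (\<lambda>i j. \<Sum>x\<in>I. c x * A x i j) (\<lambda>i j. \<Sum>y\<in>J. d y * B y i j) i j
     = (\<Sum>t\<in>?S. psd_term (\<lambda>i j. \<Sum>x\<in>I. c x * A x i j) (\<lambda>i j. \<Sum>y\<in>J. d y * B y i j) i j t)"
    using assms by (intro psd_mult_diag diag_symbol_sum)
  also have "\<dots> = (\<Sum>t\<in>?S. \<Sum>x\<in>I. \<Sum>y\<in>J. c x * d y * psd_term (A x) (B y) i j t)"
    by (intro sum.cong refl)
       (auto simp: psd_term_simp sum_distrib_left sum_distrib_right mult_ac intro: sum.swap)
  also have "\<dots> = (\<Sum>x\<in>I. \<Sum>y\<in>J. c x * d y * psd_mult (A x) (B y) i j)"
    using assms by (simp add: psd_mult_diag sum.swap[of _ ?S] sum_distrib_left)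
  finally show ?thesis .
qed

lemma psd_mult_zero_left: "psd_mult psd_zero A = psd_zero"
  by (simp add: psd_mult_def psd_term_def psd_zero_def)

lemma psd_mult_zero_right: "psd_mult A psd_zero = psd_zero"
  by (simp add: psd_mult_def psd_term_def psd_zero_def)

lemma psd_add_zero_left: "psd_add psd_zero A = A"
  by (simp add: psd_add_def psd_zero_def)

lemma ff_0 [simp]: "ff k 0 = 1"
  by (simp add: ff_def)

lemma ff_1: "ff k (Suc 0) = of_int k"
  by (simp add: ff_def)

lemma ff_eq_0: "0 \<le> k \<Longrightarrow> nat k < n \<Longrightarrow> ff k n = 0"
  unfolding ff_def by (rule prod_zero) (auto intro!: bexI[of _ "nat k"])

lemma ff_0_left: "ff 0 n = (if n = 0 then 1 else 0)"
  using ff_eq_0[of 0 n] by simp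

lemma ff_1_left: "ff 1 n = (if n \<le> 1 then 1 else 0)"
  using ff_eq_0[of 1 n] by (cases "n \<le> 1") (auto simp: ff_def le_Suc_eq lessThan_Suc)

lemma ff_minus_one: "ff (-1) n = (-1) ^ n * fact n"
  by (induction n) (auto simp: ff_def algebra_simps)

lemma psd_c_val: "psd_c c i j = (if i = 0 \<and> j = 0 then c else 0)"
  by (simp add: psd_c_def psd_mono_def)

lemma tt_val: "tt i j = (if i = 1 \<and> j = 1 then 1 else 0)"
  by (simp add: tt_def psd_mono_def)

lemma psd_mult_sum_single:
  assumes "{x. psd_term A B i j x \<noteq> 0} \<subseteq> {p}"
  shows "psd_mult A B i j = psd_term A B i j p"
  using sum_nonzero_superset[OF _ assms] by (simp add: psd_mult_def)

lemma psd_mult_sum_pair: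
  assumes "{x. psd_term A B i j x \<noteq> 0} \<subseteq> {p, q}" "p \<noteq> q"
  shows "psd_mult A B i j = psd_term A B i j p + psd_term A B i j q"
  using sum_nonzero_superset[OF _ assms(1)] assms(2) by (simp add: psd_mult_def)

lemma psd_one_mult: "psd_mult (psd_c 1) A = A"
proof (intro ext)
  fix i j
  have "{x. psd_term (psd_c 1) A i j x \<noteq> 0} \<subseteq> {(0, 0, 0)}"
    by (clarsimp simp: psd_term_simp psd_c_val ff_0_left split: if_splits)
  then show "psd_mult (psd_c 1) A i j = A i j"
    by (simp add: psd_mult_sum_single psd_term_simp psd_c_val)
qed

lemma psd_mult_one: "psd_mult A (psd_c 1) = A"
proof (intro ext)
  fix i j
  have "{x. psd_term A (psd_c 1) i j x \<noteq> 0} \<subseteq> {(0, i, j)}"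
    by (clarsimp simp: psd_term_simp psd_c_val ff_0_left split: if_splits)
  then show "psd_mult A (psd_c 1) i j = A i j"
    by (simp add: psd_mult_sum_single psd_term_simp psd_c_val)
qed

lemma uu_val: "uu i j = (if i = j \<and> i \<le> -1 then fact (nat (-1 - i)) else 0)"
proof -
  let ?p = "(nat (-1 - i), -1, 0)"
  have "{x. psd_term (psd_mono 1 (-1) 0) (psd_mono 1 0 (-1)) i j x \<noteq> 0} \<subseteq> {?p}"
    by (auto simp: psd_term_simp psd_mono_def split: if_splits)
  then have "uu i j = psd_term (psd_mono 1 (-1) 0) (psd_mono 1 0 (-1)) i j ?p"
    unfolding uu_def by (rule psd_mult_sum_single)
  then show ?thesis
    by (auto simp: psd_term_simp psd_mono_def ff_minus_one power_mult_distrib[symmetric]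
        simp flip: power_add)
qed

lemma fact_nat_minus: "i \<le> -1 \<Longrightarrow> (fact (nat (- i)) :: complex) = - of_int i * fact (nat (-1 - i))"
proof -
  assume "i \<le> -1"
  then have "nat (- i) = Suc (nat (-1 - i))" by simp
  with \<open>i \<le> -1\<close> show ?thesis by simp
qed

lemma tt_mult_uu: "psd_mult tt uu = psd_c 1"
proof (intro ext)
  fix i j
  have "{x. psd_term tt uu i j x \<noteq> 0} \<subseteq> {(0, 1, 1), (1, 1, 1)}"
    by (clarsimp simp: psd_term_simp tt_val ff_1_left split: if_splits)
  then show "psd_mult tt uu i j = psd_c 1 i j"
    by (simp add: psd_mult_sum_pair psd_term_simp tt_val uu_val psd_c_val ff_1 fact_nat_minus)
qed

lemma uu_mult_tt: "psd_mult uu tt = psd_c 1"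
proof (intro ext)
  fix i j
  have "{x. psd_term uu tt i j x \<noteq> 0} \<subseteq> {(0, i - 1, j - 1), (1, i, j)}"
    by (clarsimp simp: psd_term_simp tt_val ff_1_left split: if_splits)
  then show "psd_mult uu tt i j = psd_c 1 i j"
    by (simp add: psd_mult_sum_pair psd_term_simp tt_val uu_val psd_c_val ff_1 fact_nat_minus)
qed

section \<open>Polynomials in t\<tau> and u\<close>

(* Since t\<tau> \<circ> u = u \<circ> t\<tau> = 1, products of affine tpolys (tp_mult) stay in the span of
   the five symbols of tp_eval. *)
datatype tpoly = TPoly complex complex complex complex complex

fun tp_eval :: "tpoly \<Rightarrow> psd" where
  "tp_eval (TPoly c0 c1 c2 c3 c4) =
     (\<lambda>i j. c0 * psd_c 1 i j + c1 * tt i j + c2 * uu i j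
            + c3 * psd_mult tt tt i j + c4 * psd_mult uu uu i j)"

fun tp_affine :: "tpoly \<Rightarrow> bool" where
  "tp_affine (TPoly c0 c1 c2 c3 c4) \<longleftrightarrow> c3 = 0 \<and> c4 = 0"

instantiation tpoly :: "{zero, plus, minus}"
begin

definition zero_tpoly :: tpoly where
  "0 = TPoly 0 0 0 0 0"

fun plus_tpoly :: "tpoly \<Rightarrow> tpoly \<Rightarrow> tpoly" where
  "TPoly p0 p1 p2 p3 p4 + TPoly q0 q1 q2 q3 q4 =
     TPoly (p0 + q0) (p1 + q1) (p2 + q2) (p3 + q3) (p4 + q4)"

fun minus_tpoly :: "tpoly \<Rightarrow> tpoly \<Rightarrow> tpoly" where
  "TPoly p0 p1 p2 p3 p4 - TPoly q0 q1 q2 q3 q4 =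
     TPoly (p0 - q0) (p1 - q1) (p2 - q2) (p3 - q3) (p4 - q4)"

instance ..

end

fun tp_scale :: "complex \<Rightarrow> tpoly \<Rightarrow> tpoly" where
  "tp_scale c (TPoly p0 p1 p2 p3 p4) = TPoly (c * p0) (c * p1) (c * p2) (c * p3) (c * p4)"

fun tp_mult :: "tpoly \<Rightarrow> tpoly \<Rightarrow> tpoly" where
  "tp_mult (TPoly p0 p1 p2 _ _) (TPoly q0 q1 q2 _ _) =
     TPoly (p0 * q0 + p1 * q2 + p2 * q1) (p0 * q1 + p1 * q0) (p0 * q2 + p2 * q0)
       (p1 * q1) (p2 * q2)"

lemma tp_eval_zero: "tp_eval 0 = psd_zero"
  by (simp add: zero_tpoly_def psd_zero_def)

lemma tp_eval_add: "tp_eval (p + q) = psd_add (tp_eval p) (tp_eval q)"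
  by (cases p; cases q) (auto simp: psd_add_def algebra_simps)

lemma tp_eval_diff: "tp_eval (p - q) = psd_add (tp_eval p) (psd_smult (-1) (tp_eval q))"
  by (cases p; cases q) (auto simp: psd_add_def psd_smult_def algebra_simps)

lemma tp_eval_scale: "tp_eval (tp_scale c p) = psd_smult c (tp_eval p)"
  by (cases p) (auto simp: psd_smult_def algebra_simps)

lemma tp_eval_const: "tp_eval (TPoly c 0 0 0 0) = psd_c c"
  by (intro ext) (simp add: psd_c_val)

lemma tp_eval_tt: "tp_eval (TPoly 0 1 0 0 0) = tt"
  by simp

lemma tp_eval_uu: "tp_eval (TPoly 0 0 1 0 0) = uu"
  by simp

definition tp_base :: "nat \<Rightarrow> psd" where
  "tp_base x = (if x = 0 then psd_c 1 else if x = 1 then tt else uu)"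

lemma tp_eval_affine:
  "tp_eval (TPoly c0 c1 c2 0 0) = (\<lambda>i j. \<Sum>x\<in>{0, 1, 2}. [c0, c1, c2] ! x * tp_base x i j)"
  by (simp add: tp_base_def add.assoc)

lemma diag_symbol_tp_base: "diag_symbol (tp_base x)"
  by (simp add: tp_base_def diag_symbol_def psd_c_val tt_val uu_val)

lemma diag_symbol_tp_eval: "tp_affine p \<Longrightarrow> diag_symbol (tp_eval p)"
  by (cases p) (simp only: tp_affine.simps tp_eval_affine diag_symbol_sum diag_symbol_tp_base)

lemma psd_mult_tp_eval:
  assumes "tp_affine p" "tp_affine q"
  shows "psd_mult (tp_eval p) (tp_eval q) = tp_eval (tp_mult p q)"
proof -
  obtain p0 p1 p2 q0 q1 q2 where "p = TPoly p0 p1 p2 0 0" "q = TPoly q0 q1 q2 0 0"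
    using assms by (cases p; cases q) auto
  moreover have "psd_mult (tp_eval (TPoly p0 p1 p2 0 0)) (tp_eval (TPoly q0 q1 q2 0 0)) i j =
      (\<Sum>x\<in>{0, 1, 2}. \<Sum>y\<in>{0, 1, 2}.
         [p0, p1, p2] ! x * [q0, q1, q2] ! y * psd_mult (tp_base x) (tp_base y) i j)"
    for i j unfolding tp_eval_affine by (rule psd_mult_sum_sum) (simp_all add: diag_symbol_tp_base)
  ultimately show ?thesis
    by (auto simp: tp_base_def psd_one_mult psd_mult_one tt_mult_uu uu_mult_tt algebra_simps)
qed

lemma tp_affine_add: "tp_affine p \<Longrightarrow> tp_affine q \<Longrightarrow> tp_affine (p + q)"
  by (cases p; cases q) simp

lemma tp_affine_diff: "tp_affine p \<Longrightarrow> tp_affine q \<Longrightarrow> tp_affine (p - q)"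
  by (cases p; cases q) simp

lemma tp_affine_scale: "tp_affine p \<Longrightarrow> tp_affine (tp_scale c p)"
  by (cases p) simp

lemma tp_affine_zero: "tp_affine 0"
  by (simp add: zero_tpoly_def)

(* A datatype rather than a function on indices, so that simp decides equality of concrete
   symbolic matrices. *)
datatype 'a vec4 = Vec4 'a 'a 'a 'a

fun vec4_nth :: "'a vec4 \<Rightarrow> nat \<Rightarrow> 'a" where
  "vec4_nth (Vec4 x1 x2 x3 x4) k =
     (if k = 1 then x1 else if k = 2 then x2 else if k = 3 then x3 else x4)"

definition vec4_tab :: "(nat \<Rightarrow> 'a) \<Rightarrow> 'a vec4" where
  "vec4_tab f = Vec4 (f 1) (f 2) (f 3) (f 4)"

lemma vec4_nth_tab: "k \<in> {1..4} \<Longrightarrow> vec4_nth (vec4_tab f) k = f k"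
  by (auto simp: vec4_tab_def numeral_eq_Suc le_Suc_eq)

type_synonym smat = "tpoly vec4 vec4"

definition sentry :: "smat \<Rightarrow> nat \<Rightarrow> nat \<Rightarrow> tpoly" where
  "sentry P k l = vec4_nth (vec4_nth P k) l"

definition smat_tab :: "(nat \<Rightarrow> nat \<Rightarrow> tpoly) \<Rightarrow> smat" where
  "smat_tab f = vec4_tab (\<lambda>k. vec4_tab (f k))"

lemma sentry_tab: "k \<in> {1..4} \<Longrightarrow> l \<in> {1..4} \<Longrightarrow> sentry (smat_tab f) k l = f k l"
  by (simp add: sentry_def smat_tab_def vec4_nth_tab)

definition mat_of :: "smat \<Rightarrow> mat" where
  "mat_of P = (\<lambda>k l. if k \<in> {1..4} \<and> l \<in> {1..4} then tp_eval (sentry P k l) else psd_zero)"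

definition mzero :: mat where
  "mzero = (\<lambda>k l. psd_zero)"

definition saffine :: "smat \<Rightarrow> bool" where
  "saffine P \<longleftrightarrow> (\<forall>k\<in>{1..4}. \<forall>l\<in>{1..4}. tp_affine (sentry P k l))"

definition szero :: smat where
  "szero = smat_tab (\<lambda>k l. 0)"

definition sunit :: "tpoly \<Rightarrow> nat \<Rightarrow> nat \<Rightarrow> smat" where
  "sunit p k l = smat_tab (\<lambda>k' l'. if k' = k \<and> l' = l then p else 0)"

definition sscal :: "tpoly \<Rightarrow> smat" where
  "sscal p = smat_tab (\<lambda>k l. if k = l then p else 0)"

definition sadd :: "smat \<Rightarrow> smat \<Rightarrow> smat" where
  "sadd P Q = smat_tab (\<lambda>k l. sentry P k l + sentry Q k l)"

definition ssub :: "smat \<Rightarrow> smat \<Rightarrow> smat" where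
  "ssub P Q = smat_tab (\<lambda>k l. sentry P k l - sentry Q k l)"

definition sscale :: "complex \<Rightarrow> smat \<Rightarrow> smat" where
  "sscale c P = smat_tab (\<lambda>k l. tp_scale c (sentry P k l))"

definition smult :: "smat \<Rightarrow> smat \<Rightarrow> smat" where
  "smult P Q =
     smat_tab (\<lambda>k l. foldr (+) (map (\<lambda>m. tp_mult (sentry P k m) (sentry Q m l)) [1, 2, 3, 4]) 0)"

lemma mat_of_szero: "mat_of szero = mzero"
  by (intro ext) (auto simp: mat_of_def mzero_def szero_def sentry_tab tp_eval_zero)

lemma mat_of_sunit: "k \<in> {1..4} \<Longrightarrow> l \<in> {1..4} \<Longrightarrow> mat_of (sunit p k l) = munit (tp_eval p) k l"
  by (intro ext) (auto simp: mat_of_def sunit_def munit_def sentry_tab tp_eval_zero)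

lemma mat_of_sscal: "mat_of (sscal p) = mscal (tp_eval p)"
  by (intro ext) (auto simp: mat_of_def sscal_def mscal_def sentry_tab tp_eval_zero)

lemma mat_of_sadd: "mat_of (sadd P Q) = madd (mat_of P) (mat_of Q)"
  by (intro ext) (auto simp: mat_of_def sadd_def madd_def sentry_tab tp_eval_add psd_add_def
      psd_zero_def)

lemma mat_of_ssub: "mat_of (ssub P Q) = msub (mat_of P) (mat_of Q)"
  by (intro ext) (auto simp: mat_of_def ssub_def msub_def sentry_tab tp_eval_diff psd_add_def
      psd_smult_def psd_zero_def)

lemma mat_of_sscale: "mat_of (sscale c P) = msmult c (mat_of P)"
  by (intro ext) (auto simp: mat_of_def sscale_def msmult_def sentry_tab tp_eval_scale
      psd_smult_def psd_zero_def)

lemma mat_of_smult: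
  assumes "saffine P" "saffine Q"
  shows "mmult (mat_of P) (mat_of Q) = mat_of (smult P Q)"
proof (rule ext, rule ext)
  fix k l
  show "mmult (mat_of P) (mat_of Q) k l = mat_of (smult P Q) k l"
  proof (cases "k \<in> {1..4} \<and> l \<in> {1..4}")
    case True
    with assms show ?thesis
      by (simp add: mmult_def mat_of_def smult_def sentry_tab saffine_def psd_mult_tp_eval
          tp_eval_add tp_eval_zero)
  next
    case False
    then show ?thesis
      by (auto simp: mmult_def mat_of_def psd_mult_zero_left psd_mult_zero_right psd_add_zero_left)
  qed
qed

lemma saffine_sunit: "tp_affine p \<Longrightarrow> saffine (sunit p k l)"
  by (simp add: saffine_def sunit_def sentry_tab tp_affine_zero)

lemma saffine_sscal: "tp_affine p \<Longrightarrow> saffine (sscal p)"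
  by (simp add: saffine_def sscal_def sentry_tab tp_affine_zero)

lemma saffine_sadd: "saffine P \<Longrightarrow> saffine Q \<Longrightarrow> saffine (sadd P Q)"
  by (simp add: saffine_def sadd_def sentry_tab tp_affine_add)

lemma saffine_ssub: "saffine P \<Longrightarrow> saffine Q \<Longrightarrow> saffine (ssub P Q)"
  by (simp add: saffine_def ssub_def sentry_tab tp_affine_diff)

lemma saffine_sscale: "saffine P \<Longrightarrow> saffine (sscale c P)"
  by (simp add: saffine_def sscale_def sentry_tab tp_affine_scale)

lemma mat_even_parts:
  assumes "mat_even X"
  shows "meven_part X = X \<and> modd_part X = mzero"
proof -
  have "X k l = psd_zero" if "idx_odd k \<noteq> idx_odd l" for k l
    using fun_cong[OF fun_cong[OF assms[unfolded mat_even_def]], of k l] that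
    by (simp add: modd_part_def)
  then have "meven_part X = X"
    by (intro ext) (simp add: meven_part_def)
  with assms show ?thesis
    by (simp add: mat_even_def mzero_def)
qed

lemma mat_odd_parts:
  assumes "mat_odd X"
  shows "modd_part X = X \<and> meven_part X = mzero"
proof -
  have "X k l = psd_zero" if "idx_odd k = idx_odd l" for k l
    using fun_cong[OF fun_cong[OF assms[unfolded mat_odd_def]], of k l] that
    by (simp add: meven_part_def)
  then have "modd_part X = X"
    by (intro ext) (simp add: modd_part_def)
  with assms show ?thesis
    by (simp add: mat_odd_def mzero_def)
qed

lemma mmult_mzero: "mmult mzero X = mzero" "mmult X mzero = mzero"
  by (simp_all add: mmult_def mzero_def psd_mult_zero_left psd_mult_zero_right psd_add_zero_left)

lemma madd_mzero: "madd mzero X = X" "madd X mzero = X"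
  by (simp_all add: madd_def mzero_def psd_add_def psd_zero_def)

lemma msmult_mzero: "msmult c mzero = mzero"
  by (simp add: msmult_def mzero_def psd_smult_def psd_zero_def)

lemma comm_mzero: "comm mzero X = mzero" "comm X mzero = mzero"
  by (simp_all add: comm_def msub_def mmult_mzero)
     (simp_all add: mzero_def psd_add_def psd_smult_def psd_zero_def)

lemma acomm_mzero: "acomm mzero X = mzero" "acomm X mzero = mzero"
  by (simp_all add: acomm_def mmult_mzero madd_mzero)

lemma mbr_homogeneous:
  assumes "if p then mat_odd X else mat_even X" "if q then mat_odd Y else mat_even Y"
  shows "mbr X Y = (if p \<and> q then acomm X Y else comm X Y)"
  using assms
  by (cases p; cases q)
     (simp_all add: mbr_def mat_even_parts mat_odd_parts comm_mzero acomm_mzero madd_mzero)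

lemma meven_part_msmult: "meven_part (msmult c X) = msmult c (meven_part X)"
  by (intro ext) (simp add: meven_part_def msmult_def psd_smult_def psd_zero_def)

lemma modd_part_msmult: "modd_part (msmult c X) = msmult c (modd_part X)"
  by (intro ext) (simp add: modd_part_def msmult_def psd_smult_def psd_zero_def)

section \<open>Structure constants of the rescaled matrices\<close>

abbreviation tp_const :: "complex \<Rightarrow> tpoly" where
  "tp_const c \<equiv> TPoly c 0 0 0 0"

abbreviation tp_tt :: tpoly where
  "tp_tt \<equiv> TPoly 0 1 0 0 0"

abbreviation tp_uu :: tpoly where
  "tp_uu \<equiv> TPoly 0 0 1 0 0"

definition tmat_sym :: "complex \<Rightarrow> complex \<Rightarrow> gb \<Rightarrow> smat" where
  "tmat_sym a b x = (case x of
      Cp \<Rightarrow> sscal tp_tt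
    | C \<Rightarrow> sscal (tp_const 1)
    | Cm \<Rightarrow> sscal tp_uu
    | E1 \<Rightarrow> sunit (tp_const 1) 1 2
    | F1 \<Rightarrow> sunit (tp_const 1) 2 1
    | H1 \<Rightarrow> ssub (sunit (tp_const 1) 1 1) (sunit (tp_const 1) 2 2)
    | E2 \<Rightarrow> sunit (tp_const 1) 4 3
    | F2 \<Rightarrow> sunit (tp_const 1) 3 4
    | H2 \<Rightarrow> ssub (sunit (tp_const 1) 3 3) (sunit (tp_const 1) 4 4)
    | T3 \<Rightarrow> sadd (sunit tp_tt 1 3) (sunit (tp_const a) 4 2)
    | T2 \<Rightarrow> sadd (sunit (tp_scale (-1) tp_tt) 1 4) (sunit (tp_const a) 3 2)
    | D4 \<Rightarrow> sadd (sunit tp_tt 2 4) (sunit (tp_const a) 3 1)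
    | D1 \<Rightarrow> sadd (sunit (tp_scale (-1) tp_tt) 2 3) (sunit (tp_const a) 4 1)
    | T1 \<Rightarrow> sadd (sunit (tp_const b) 1 4) (sunit tp_uu 3 2)
    | T4 \<Rightarrow> sadd (sunit (tp_const b) 1 3) (sunit (tp_scale (-1) tp_uu) 4 2)
    | D2 \<Rightarrow> sadd (sunit (tp_const b) 2 3) (sunit tp_uu 4 1)
    | D3 \<Rightarrow> sadd (sunit (tp_const b) 2 4) (sunit (tp_scale (-1) tp_uu) 3 1))"

lemma tmat_eq_mat_of: "tmat a b x = mat_of (tmat_sym a b x)"
  by (cases x)
     (simp_all add: tmat_def tmat_sym_def mat_of_sunit mat_of_sadd mat_of_ssub mat_of_sscal
       tp_eval_const tp_eval_tt tp_eval_uu tp_eval_scale del: tp_eval.simps tp_scale.simps)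

lemma tmat_homogeneous: "if gb_odd x then mat_odd (tmat a b x) else mat_even (tmat a b x)"
  by (cases x)
     (auto simp: gb_odd_def mat_odd_def mat_even_def meven_part_def modd_part_def tmat_def munit_def
        madd_def msub_def mscal_def idx_odd_def psd_add_def psd_smult_def psd_zero_def fun_eq_iff)

(* The scalars are forced by the brackets: for instance [T1, T3] = (ab + 1) E1 for the
   unscaled matrices fixes the factor of E1. *)
definition basis_scale :: "complex \<Rightarrow> complex \<Rightarrow> gb \<Rightarrow> complex" where
  "basis_scale a b x = (let K = a * b + 1 in case x of
      T1 \<Rightarrow> 1 | T2 \<Rightarrow> 1 | T3 \<Rightarrow> 1 | T4 \<Rightarrow> 1
    | D1 \<Rightarrow> 2 / K | D2 \<Rightarrow> - 2 / K | D3 \<Rightarrow> - 2 / K | D4 \<Rightarrow> 2 / K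
    | E1 \<Rightarrow> K | H1 \<Rightarrow> 1 | F1 \<Rightarrow> - 4 / K
    | E2 \<Rightarrow> 1 | H2 \<Rightarrow> - 1 | F2 \<Rightarrow> - 1
    | C \<Rightarrow> - 2 * (K - 2) / K | Cp \<Rightarrow> 2 * a / K | Cm \<Rightarrow> 2 * b / K)"

definition basis_sym :: "complex \<Rightarrow> complex \<Rightarrow> gb \<Rightarrow> smat" where
  "basis_sym a b x = sscale (basis_scale a b x) (tmat_sym a b x)"

definition basis_mat :: "complex \<Rightarrow> complex \<Rightarrow> gb \<Rightarrow> mat" where
  "basis_mat a b x = msmult (basis_scale a b x) (tmat a b x)"

lemma basis_mat_eq_mat_of: "basis_mat a b x = mat_of (basis_sym a b x)"
  by (simp add: basis_mat_def basis_sym_def tmat_eq_mat_of mat_of_sscale)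

lemma saffine_basis_sym: "saffine (basis_sym a b x)"
  by (cases x)
     (simp_all add: basis_sym_def tmat_sym_def saffine_sscale saffine_sadd saffine_ssub
       saffine_sunit saffine_sscal tp_affine_scale del: tp_scale.simps)

lemma basis_mat_homogeneous:
  "if gb_odd x then mat_odd (basis_mat a b x) else mat_even (basis_mat a b x)"
  using tmat_homogeneous[of x a b]
  by (auto simp: basis_mat_def mat_odd_def mat_even_def meven_part_msmult modd_part_msmult
      msmult_mzero[unfolded mzero_def])

lemma diag_symbol_basis_mat: "diag_symbol (basis_mat a b x k l)"
  using saffine_basis_sym[of a b x]
  by (simp add: basis_mat_eq_mat_of mat_of_def saffine_def diag_symbol_tp_eval diag_symbol_zero)

definition sbracket :: "bool \<Rightarrow> smat \<Rightarrow> smat \<Rightarrow> smat" where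
  "sbracket both_odd P Q = (if both_odd then sadd else ssub) (smult P Q) (smult Q P)"

lemma mbr_basis_mat:
  "mbr (basis_mat a b x) (basis_mat a b y) =
     mat_of (sbracket (gb_odd x \<and> gb_odd y) (basis_sym a b x) (basis_sym a b y))"
  unfolding mbr_homogeneous[OF basis_mat_homogeneous basis_mat_homogeneous]
  by (simp add: comm_def acomm_def sbracket_def basis_mat_eq_mat_of mat_of_smult saffine_basis_sym
      mat_of_sadd mat_of_ssub)

definition mcomb :: "('i::finite \<Rightarrow> complex) \<Rightarrow> ('i \<Rightarrow> mat) \<Rightarrow> mat" where
  "mcomb u M = (\<lambda>k l i j. \<Sum>x\<in>UNIV. u x * M x k l i j)"

lemma mcomb_zero: "mcomb (\<lambda>x. 0) M = mzero"
  by (simp add: mcomb_def mzero_def psd_zero_def)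

lemma mcomb_scale: "mcomb (\<lambda>x. c * u x) M = msmult c (mcomb u M)"
  by (simp add: mcomb_def msmult_def psd_smult_def sum_distrib_left mult.assoc)

lemma mcomb_add: "mcomb (\<lambda>x. u x + v x) M = madd (mcomb u M) (mcomb v M)"
  by (simp add: mcomb_def madd_def psd_add_def distrib_right sum.distrib)

lemma lc_Cons: "lc ((z, c) # r) = (\<lambda>x. (if x = z then c else 0) + lc r x)"
  by (auto simp: lc_def)

definition scomb :: "(gb \<times> complex) list \<Rightarrow> (gb \<Rightarrow> smat) \<Rightarrow> smat" where
  "scomb r F = foldr (\<lambda>(z, c) P. sadd (sscale c (F z)) P) r szero"

lemma mcomb_lc: "mcomb (lc r) (\<lambda>z. mat_of (F z)) = mat_of (scomb r F)"
proof (induction r)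
  case Nil
  then show ?case
    by (simp add: lc_def scomb_def mcomb_zero mat_of_szero mzero_def)
next
  case (Cons p r)
  obtain z c where p: "p = (z, c)" by (cases p)
  have "mcomb (\<lambda>x. if x = z then c else 0) (\<lambda>z. mat_of (F z)) = msmult c (mat_of (F z))"
    by (simp add: mcomb_def msmult_def psd_smult_def if_distrib[of "\<lambda>v. v * _"] cong: if_cong)
  with Cons show ?case
    by (simp add: p lc_Cons mcomb_add scomb_def mat_of_sadd mat_of_sscale)
qed

definition sbr_basis :: "(gb \<Rightarrow> smat) \<Rightarrow> gb \<Rightarrow> gb \<Rightarrow> smat" where
  "sbr_basis F x y =
     (case tlookup x y of
        Some r \<Rightarrow> scomb r F
      | None \<Rightarrow> (case tlookup y x of
                  Some r \<Rightarrow> sscale (if gb_odd x \<and> gb_odd y then 1 else -1) (scomb r F)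
                | None \<Rightarrow> szero))"

lemma mcomb_gbr_basis: "mcomb (gbr_basis x y) (\<lambda>z. mat_of (F z)) = mat_of (sbr_basis F x y)"
  by (cases "tlookup x y"; cases "tlookup y x")
     (simp_all add: gbr_basis_def sbr_basis_def mcomb_lc mcomb_scale mcomb_zero mat_of_sscale
       mat_of_szero mzero_def)

(* Stated for b = (K - 1) / a, so that field_simps only has to clear the atomic denominators
   a and K = ab + 1. *)
lemma basis_sym_bracket:
  assumes "a \<noteq> 0" "K \<noteq> 0"
  shows "sbracket (gb_odd x \<and> gb_odd y) (basis_sym a ((K - 1) / a) x) (basis_sym a ((K - 1) / a) y)
       = sbr_basis (basis_sym a ((K - 1) / a)) x y"
  using assms
  by (cases x; cases y)
     (simp_all add: sbracket_def sbr_basis_def tlookup_def gtable_def gb_odd_def scomb_def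
       basis_sym_def basis_scale_def tmat_sym_def sadd_def ssub_def sscale_def smult_def sunit_def
       sscal_def szero_def smat_tab_def vec4_tab_def sentry_def zero_tpoly_def Let_def field_simps)

lemma basis_mat_bracket:
  assumes "a \<noteq> 0" "a * b + 1 \<noteq> 0"
  shows "mbr (basis_mat a b x) (basis_mat a b y) = mcomb (gbr_basis x y) (basis_mat a b)"
proof -
  have "sbracket (gb_odd x \<and> gb_odd y) (basis_sym a b x) (basis_sym a b y) =
      sbr_basis (basis_sym a b) x y"
    using basis_sym_bracket[of a "a * b + 1" x y] assms by simp
  moreover have "basis_mat a b = (\<lambda>z. mat_of (basis_sym a b z))"
    by (simp add: fun_eq_iff basis_mat_eq_mat_of)
  ultimately show ?thesis
    unfolding mbr_basis_mat by (simp add: mcomb_gbr_basis)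
qed

definition mcomb2 :: "('i::finite \<Rightarrow> complex) \<Rightarrow> ('i \<Rightarrow> complex) \<Rightarrow> ('i \<Rightarrow> 'i \<Rightarrow> mat) \<Rightarrow> mat" where
  "mcomb2 u v G = (\<lambda>k l i j. \<Sum>x\<in>UNIV. \<Sum>y\<in>UNIV. u x * v y * G x y k l i j)"

lemma mcomb2_swap: "mcomb2 v u G = mcomb2 u v (\<lambda>x y. G y x)"
  unfolding mcomb2_def by (intro ext, subst sum.swap) (simp add: mult_ac)

lemma madd_mcomb2: "madd (mcomb2 u v G) (mcomb2 u v G') = mcomb2 u v (\<lambda>x y. madd (G x y) (G' x y))"
  by (simp add: mcomb2_def madd_def psd_add_def distrib_left sum.distrib)

lemma msub_mcomb2:
  "msub (mcomb2 u v G) (mcomb2 u v G') = mcomb2 u v (\<lambda>x y. msub (G x y) (G' x y))"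
  by (simp add: mcomb2_def msub_def psd_add_def psd_smult_def sum_subtractf sum_negf
      right_diff_distrib)

lemma meven_part_mcomb: "meven_part (mcomb u M) = mcomb u (\<lambda>x. meven_part (M x))"
  by (intro ext) (simp add: meven_part_def mcomb_def psd_zero_def)

lemma modd_part_mcomb: "modd_part (mcomb u M) = mcomb u (\<lambda>x. modd_part (M x))"
  by (intro ext) (simp add: modd_part_def mcomb_def psd_zero_def)

lemma mmult_mcomb:
  assumes "\<And>x k l. diag_symbol (M x k l)" "\<And>y k l. diag_symbol (N y k l)"
  shows "mmult (mcomb u M) (mcomb v N) = mcomb2 u v (\<lambda>x y. mmult (M x) (N y))"
  unfolding mmult_def mcomb_def mcomb2_def
  by (simp add: psd_add_def psd_zero_def psd_mult_sum_sum assms distrib_left sum.distrib)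

lemma mbr_mcomb:
  assumes "\<And>x k l. diag_symbol (M x k l)"
  shows "mbr (mcomb u M) (mcomb v M) = mcomb2 u v (\<lambda>x y. mbr (M x) (M y))"
proof -
  have "diag_symbol (meven_part (M x) k l)" "diag_symbol (modd_part (M x) k l)" for x k l
    using assms by (simp_all add: meven_part_def modd_part_def diag_symbol_zero)
  then show ?thesis
    unfolding mbr_def comm_def acomm_def meven_part_mcomb modd_part_mcomb
    by (simp add: mmult_mcomb[where u = u and v = v] mmult_mcomb[where u = v and v = u]
        mcomb2_swap[of v u] madd_mcomb2 msub_mcomb2)
qed

lemma mcomb_gbr: "mcomb (gbr u v) M = mcomb2 u v (\<lambda>x y. mcomb (gbr_basis x y) M)"
proof (intro ext)
  fix k l i j
  have "(\<Sum>z\<in>UNIV. (\<Sum>x\<in>UNIV. \<Sum>y\<in>UNIV. u x * v y * gbr_basis x y z) * M z k l i j)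
      = (\<Sum>z\<in>UNIV. \<Sum>x\<in>UNIV. \<Sum>y\<in>UNIV. u x * v y * (gbr_basis x y z * M z k l i j))"
    by (simp add: sum_distrib_right mult.assoc)
  also have "\<dots> = (\<Sum>x\<in>UNIV. \<Sum>y\<in>UNIV. \<Sum>z\<in>UNIV. u x * v y * (gbr_basis x y z * M z k l i j))"
    by (subst sum.swap, rule sum.cong, rule refl, rule sum.swap)
  finally show "mcomb (gbr u v) M k l i j = mcomb2 u v (\<lambda>x y. mcomb (gbr_basis x y) M) k l i j"
    by (simp add: mcomb_def mcomb2_def gbr_def sum_distrib_left)
qed

lemma tmat_independent:
  assumes "b \<noteq> 0" and w: "mcomb w (tmat a b) = mzero"
  shows "w x = 0"
proof -
  have e: "(\<Sum>x\<in>UNIV. w x * tmat a b x k l i j) = 0" for k l i j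
    using fun_cong[OF fun_cong[OF fun_cong[OF fun_cong[OF w]]], of k l i j]
    by (simp add: mcomb_def mzero_def psd_zero_def)
  \<comment> \<open>e k l i j is the coefficient of t^j \<tau>^i in entry (k, l); apart from C, H1 and H2,
    which share the diagonal, each w x is isolated by a single one of them.\<close>
  note entries = gb_UNIV tmat_def munit_def madd_def msub_def mscal_def psd_add_def psd_smult_def
    psd_c_val tt_val uu_val psd_zero_def
  have "w E1 = 0" "w F1 = 0" "w E2 = 0" "w F2 = 0" "w T1 = 0" "w T2 = 0" "w T3 = 0" "w T4 = 0"
    "w D1 = 0" "w D2 = 0" "w D3 = 0" "w D4 = 0" "w Cp = 0" "w Cm = 0"
    using e[of 1 2 0 0] e[of 2 1 0 0] e[of 4 3 0 0] e[of 3 4 0 0]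
      e[of 1 4 0 0] e[of 1 4 1 1] e[of 1 3 1 1] e[of 1 3 0 0]
      e[of 2 3 1 1] e[of 2 3 0 0] e[of 2 4 0 0] e[of 2 4 1 1]
      e[of 1 1 1 1] e[of 1 1 "-1" "-1"] \<open>b \<noteq> 0\<close>
    by (simp_all add: entries)
  moreover have "w C + w H1 = 0" "w C - w H1 = 0" "w C + w H2 = 0"
    using e[of 1 1 0 0] e[of 2 2 0 0] e[of 3 3 0 0] by (simp_all add: entries)
  ultimately show ?thesis
    by (cases x) (auto simp: eq_neg_iff_add_eq_0[symmetric])
qed

lemma basis_scale_nonzero:
  assumes "a * b \<noteq> 0" "a * b \<noteq> 1" "a * b \<noteq> -1"
  shows "basis_scale a b x \<noteq> 0"
proof -
  have "a * b + 1 \<noteq> 0" "a * b + 1 - 2 \<noteq> 0"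
    using assms by (simp_all add: eq_neg_iff_add_eq_0)
  with assms show ?thesis
    by (cases x) (simp_all add: basis_scale_def)
qed

definition gamma_rep :: "complex \<Rightarrow> complex \<Rightarrow> gamma \<Rightarrow> mat" where
  "gamma_rep a b u = mcomb u (basis_mat a b)"

lemma gamma_rep_tmat: "gamma_rep a b u = mcomb (\<lambda>x. u x * basis_scale a b x) (tmat a b)"
  by (simp add: gamma_rep_def mcomb_def basis_mat_def msmult_def psd_smult_def mult.assoc)

lemma gamma_rep_add: "gamma_rep a b (\<lambda>z. u z + v z) = madd (gamma_rep a b u) (gamma_rep a b v)"
  by (simp add: gamma_rep_def mcomb_add)

lemma gamma_rep_scale: "gamma_rep a b (\<lambda>z. c * u z) = msmult c (gamma_rep a b u)"
  by (simp add: gamma_rep_def mcomb_scale)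

lemma inj_gamma_rep:
  assumes "b \<noteq> 0" "\<And>x. basis_scale a b x \<noteq> 0"
  shows "inj (gamma_rep a b)"
proof (rule injI)
  fix u v assume "gamma_rep a b u = gamma_rep a b v"
  then have "mcomb (\<lambda>x. (u x - v x) * basis_scale a b x) (tmat a b) = mzero"
    by (simp add: gamma_rep_tmat mcomb_def mzero_def psd_zero_def fun_eq_iff algebra_simps
        sum_subtractf)
  then have "(u x - v x) * basis_scale a b x = 0" for x
    using tmat_independent[OF \<open>b \<noteq> 0\<close>] by blast
  with assms(2) show "u = v"
    by (simp add: fun_eq_iff)
qed

lemma range_gamma_rep:
  assumes "\<And>x. basis_scale a b x \<noteq> 0"
  shows "range (gamma_rep a b) = mspan a b"
proof (intro set_eqI iffI)
  fix X assume "X \<in> range (gamma_rep a b)"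
  then show "X \<in> mspan a b"
    by (auto simp: mspan_def gamma_rep_tmat mcomb_def)
next
  fix X assume "X \<in> mspan a b"
  then obtain c where "X = mcomb c (tmat a b)"
    by (auto simp: mspan_def mcomb_def)
  also have "\<dots> = gamma_rep a b (\<lambda>x. c x / basis_scale a b x)"
    using assms by (simp add: gamma_rep_tmat)
  finally show "X \<in> range (gamma_rep a b)"
    by blast
qed

lemma gamma_rep_even:
  assumes "gamma_even u"
  shows "mat_even (gamma_rep a b u)"
proof -
  have vanish: "u x * modd_part (basis_mat a b x) k l i j = 0" for x k l i j
    using assms basis_mat_homogeneous[of x a b] mat_even_parts[of "basis_mat a b x"]
    by (cases "gb_odd x") (simp_all add: gamma_even_def mzero_def psd_zero_def)
  show ?thesis
    unfolding mat_even_def gamma_rep_def modd_part_mcomb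
    by (simp add: mcomb_def psd_zero_def vanish)
qed

lemma gamma_rep_odd:
  assumes "gamma_odd u"
  shows "mat_odd (gamma_rep a b u)"
proof -
  have vanish: "u x * meven_part (basis_mat a b x) k l i j = 0" for x k l i j
    using assms basis_mat_homogeneous[of x a b] mat_odd_parts[of "basis_mat a b x"]
    by (cases "gb_odd x") (simp_all add: gamma_odd_def mzero_def psd_zero_def)
  show ?thesis
    unfolding mat_odd_def gamma_rep_def meven_part_mcomb
    by (simp add: mcomb_def psd_zero_def vanish)
qed

lemma gamma_rep_bracket:
  assumes "a \<noteq> 0" "a * b + 1 \<noteq> 0"
  shows "gamma_rep a b (gbr u v) = mbr (gamma_rep a b u) (gamma_rep a b v)"
  by (simp add: gamma_rep_def mcomb_gbr mbr_mcomb diag_symbol_basis_mat basis_mat_bracket[OF assms])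

theorem theorem4p2:
  fixes a b :: complex
  assumes "a * b \<noteq> 0" and "a * b \<noteq> 1" and "a * b \<noteq> -1"
  shows "\<exists>\<phi> :: gamma \<Rightarrow> mat.
           (\<forall>u v. \<phi> (\<lambda>z. u z + v z) = madd (\<phi> u) (\<phi> v))
         \<and> (\<forall>c u. \<phi> (\<lambda>z. c * u z) = msmult c (\<phi> u))
         \<and> inj \<phi>
         \<and> range \<phi> = mspan a b
         \<and> (\<forall>u. gamma_even u \<longrightarrow> mat_even (\<phi> u))
         \<and> (\<forall>u. gamma_odd u \<longrightarrow> mat_odd (\<phi> u))
         \<and> (\<forall>u v. \<phi> (gbr u v) = mbr (\<phi> u) (\<phi> v))"
proof -
  have "a \<noteq> 0" "b \<noteq> 0" "a * b + 1 \<noteq> 0"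
    using assms by (simp_all add: eq_neg_iff_add_eq_0)
  moreover have "basis_scale a b x \<noteq> 0" for x
    using basis_scale_nonzero[OF assms] .
  ultimately show ?thesis
    by (intro exI[of _ "gamma_rep a b"])
       (simp add: gamma_rep_add gamma_rep_scale inj_gamma_rep range_gamma_rep gamma_rep_even
         gamma_rep_odd gamma_rep_bracket)
qed

end
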